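(* Let $A\in\mathbb{R}^{D\times D}$ be real symmetric and let $\hat A_1,\hat A_2,\dots$ be mutually independent random $D\times D$ matrices with $\mathbb{E}[\hat A_j]=A$ for all $j$. Define $\hat T_0=I$, $\hat T_1=\hat A_1$, and $\hat T_k=2\hat A_k\hat T_{k-1}-\hat T_{k-2}$ for $k\ge2$. Suppose there is a constant $\alpha$ such that $$4\,\mathbb{E}[\|\hat A_k\|^2]+2\,\mathbb{E}[\|\hat A_k\|]+1\le\alpha\qquad\text{for all }k\ge1.$$ Then for all $k\ge 0$, $$\mathbb{E}\big[\|\hat T_k\|_F^2\big]\le D\,\alpha^k.$$
   Context: For a $D\times D$ matrix $M$, $\|M\|$ denotes the spectral (operator) norm and $\|M\|_F=(\sum_{i,j}M_{ij}^2)^{1/2}$ the Frobenius norm. *)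

theory Defs
  imports "HOL-Probability.Probability"
begin

text \<open>Spectral (operator) norm of a square matrix. Note that the library norm on
  real^'n^'n is already the Frobenius norm.\<close>
definition spec_norm :: "real^'n^'n \<Rightarrow> real" where
  "spec_norm M = onorm (\<lambda>x. M *v x)"

fun chebT :: "(nat \<Rightarrow> real^'n^'n) \<Rightarrow> nat \<Rightarrow> real^'n^'n" where
  "chebT B 0 = mat 1"
| "chebT B (Suc 0) = B 1"
| "chebT B (Suc (Suc k)) = (2::real) *\<^sub>R (B (Suc (Suc k)) ** chebT B (Suc k)) - chebT B k"

end

theory Submission
  imports Defs
begin

text \<open>Pointwise, \<open>\<parallel>2 B T - T'\<parallel>\<^sub>F \<le> 2 \<parallel>B\<parallel> \<parallel>T\<parallel>\<^sub>F + \<parallel>T'\<parallel>\<^sub>F\<close>, and squaring with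
  \<open>2xy \<le> x\<^sup>2 + y\<^sup>2\<close> gives
  \<open>\<parallel>T\<^sub>k\<parallel>\<^sub>F\<^sup>2 \<le> (4\<parallel>A\<^sub>k\<parallel>\<^sup>2 + 2\<parallel>A\<^sub>k\<parallel>) \<parallel>T\<^sub>k\<^sub>-\<^sub>1\<parallel>\<^sub>F\<^sup>2 + (2\<parallel>A\<^sub>k\<parallel> + 1) \<parallel>T\<^sub>k\<^sub>-\<^sub>2\<parallel>\<^sub>F\<^sup>2\<close>.
  As \<open>A\<^sub>k\<close> is independent of \<open>A\<^sub>1, \<dots>, A\<^sub>k\<^sub>-\<^sub>1\<close>, which determine \<open>T\<^sub>k\<^sub>-\<^sub>1\<close> and \<open>T\<^sub>k\<^sub>-\<^sub>2\<close>,
  the expectation of each product factorises. The resulting two-term recurrence, whose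
  coefficients sum to at most \<open>\<alpha>\<close>, yields \<open>E \<parallel>T\<^sub>k\<parallel>\<^sub>F\<^sup>2 \<le> D \<alpha>\<^sup>k\<close> by induction from
  \<open>\<parallel>T\<^sub>0\<parallel>\<^sub>F\<^sup>2 = D\<close> and \<open>\<parallel>T\<^sub>1\<parallel>\<^sub>F\<^sup>2 \<le> D \<parallel>A\<^sub>1\<parallel>\<^sup>2\<close>.\<close>

lemma norm_vec_sq_eq_sum: "(norm (x::real^'m))\<^sup>2 = (\<Sum>i\<in>UNIV. (x$i)\<^sup>2)"
  unfolding power2_norm_eq_inner inner_vec_def by (simp add: power2_eq_square)

lemma norm_matrix_sq_eq_sum: "(norm (M::real^'m^'k))\<^sup>2 = (\<Sum>i\<in>UNIV. \<Sum>j\<in>UNIV. (M$i$j)\<^sup>2)"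
  unfolding power2_norm_eq_inner inner_vec_def by (simp add: norm_vec_sq_eq_sum power2_eq_square)

lemma norm_matrix_vector_mult_le: "norm ((M::real^'m^'k) *v x) \<le> norm M * norm x"
proof -
  have "(norm (M *v x))\<^sup>2 = (\<Sum>i\<in>UNIV. (M$i \<bullet> x)\<^sup>2)"
    by (simp add: norm_vec_sq_eq_sum matrix_vector_mult_def inner_vec_def)
  also have "\<dots> \<le> (\<Sum>i\<in>UNIV. (norm (M$i) * norm x)\<^sup>2)"
    by (intro sum_mono) (metis Cauchy_Schwarz_ineq2 abs_ge_zero power2_abs power_mono)
  also have "\<dots> = (norm M * norm x)\<^sup>2"
    by (simp add: norm_matrix_sq_eq_sum norm_vec_sq_eq_sum power_mult_distrib sum_distrib_right)
  finally show ?thesis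
    by (rule power2_le_imp_le) simp
qed

lemma spec_norm_nonneg: "0 \<le> spec_norm M"
  unfolding spec_norm_def by (rule onorm_pos_le) simp

lemma spec_norm_le_norm: "spec_norm M \<le> norm M"
  unfolding spec_norm_def by (rule onorm_le) (rule norm_matrix_vector_mult_le)

lemma norm_matrix_vector_mult_le_spec_norm: "norm (M *v x) \<le> spec_norm M * norm x"
  unfolding spec_norm_def using onorm[OF matrix_vector_mul_bounded_linear] .

lemma spec_norm_triangle: "spec_norm (M + N) \<le> spec_norm M + spec_norm N"
  unfolding spec_norm_def matrix_vector_mult_add_rdistrib
  by (rule onorm_triangle) simp_all

lemma spec_norm_diff_le: "\<bar>spec_norm M - spec_norm N\<bar> \<le> norm (M - N)"
  using spec_norm_triangle[of N "M - N"] spec_norm_triangle[of M "N - M"]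
    spec_norm_le_norm[of "M - N"] spec_norm_le_norm[of "N - M"]
  by (simp add: norm_minus_commute)

lemma lipschitz_spec_norm: "1-lipschitz_on UNIV spec_norm"
  by (rule lipschitz_onI) (simp_all add: dist_norm dist_real_def spec_norm_diff_le)

lemma borel_measurable_spec_norm[measurable]: "spec_norm \<in> borel_measurable borel"
  by (rule borel_measurable_continuous_onI[OF lipschitz_on_continuous_on[OF lipschitz_spec_norm]])

lemma norm_matrix_mult_le_spec_norm:
  fixes A :: "real^'n^'n" and X :: "real^'k^'n"
  shows "norm (A ** X) \<le> spec_norm A * norm X"
proof -
  define col where "col j = (\<chi> i. X$i$j)" for j
  have entry: "(A ** X)$i$j = (A *v col j)$i" for i j
    by (simp add: matrix_matrix_mult_def matrix_vector_mult_def col_def)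
  have col_sum: "(norm Z)\<^sup>2 = (\<Sum>j\<in>UNIV. (norm (\<chi> i. Z$i$j))\<^sup>2)" for Z :: "real^'k^'n"
    unfolding norm_matrix_sq_eq_sum norm_vec_sq_eq_sum by (subst sum.swap) simp
  have "(norm (A ** X))\<^sup>2 = (\<Sum>j\<in>UNIV. (norm (A *v col j))\<^sup>2)"
    by (simp add: col_sum entry)
  also have "\<dots> \<le> (\<Sum>j\<in>UNIV. (spec_norm A * norm (col j))\<^sup>2)"
    by (intro sum_mono power_mono norm_matrix_vector_mult_le_spec_norm) simp
  also have "\<dots> = (spec_norm A * norm X)\<^sup>2"
    by (simp add: power_mult_distrib sum_distrib_left col_sum[of X] col_def)
  finally show ?thesis
    by (rule power2_le_imp_le) (simp add: spec_norm_nonneg)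
qed

lemma norm_mat_1_sq: "(norm (mat 1 :: real^'n^'n))\<^sup>2 = real CARD('n)"
proof -
  have "(\<Sum>j\<in>UNIV. ((mat 1 :: real^'n^'n) $ i $ j)\<^sup>2) = (\<Sum>j\<in>UNIV. if i = j then 1 else 0)" for i
    by (intro sum.cong) (simp_all add: mat_def)
  also have "\<dots> i = 1" for i :: 'n
    by (simp add: sum.delta)
  finally show ?thesis
    by (simp add: norm_matrix_sq_eq_sum)
qed

lemma norm_sq_le_card_spec_norm_sq: "(norm (A::real^'n^'n))\<^sup>2 \<le> real CARD('n) * (spec_norm A)\<^sup>2"
proof -
  have "(norm A)\<^sup>2 \<le> (spec_norm A * norm (mat 1 :: real^'n^'n))\<^sup>2"
    using norm_matrix_mult_le_spec_norm[of A "mat 1"] by (intro power_mono) auto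
  then show ?thesis
    by (simp add: power_mult_distrib norm_mat_1_sq mult.commute)
qed

lemma norm_chebyshev_step_sq_le:
  fixes B :: "real^'n^'n" and X Y :: "real^'k^'n"
  shows "(norm (2 *\<^sub>R (B ** X) - Y))\<^sup>2 \<le>
    (4 * (spec_norm B)\<^sup>2 + 2 * spec_norm B) * (norm X)\<^sup>2 + (2 * spec_norm B + 1) * (norm Y)\<^sup>2"
proof -
  let ?s = "spec_norm B"
  have "norm (2 *\<^sub>R (B ** X) - Y) \<le> 2 * norm (B ** X) + norm Y"
    using norm_triangle_ineq4[of "2 *\<^sub>R (B ** X)" Y] by simp
  also have "\<dots> \<le> 2 * ?s * norm X + norm Y"
    using norm_matrix_mult_le_spec_norm[of B X] by simp
  finally have "(norm (2 *\<^sub>R (B ** X) - Y))\<^sup>2 \<le> (2 * ?s * norm X + norm Y)\<^sup>2"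
    by (simp add: power_mono)
  also have "\<dots> \<le> (4 * ?s\<^sup>2 + 2 * ?s) * (norm X)\<^sup>2 + (2 * ?s + 1) * (norm Y)\<^sup>2"
  proof -
    have "?s * (2 * (norm X * norm Y)) \<le> ?s * ((norm X)\<^sup>2 + (norm Y)\<^sup>2)"
      using sum_squares_bound[of "norm X" "norm Y"]
      by (intro mult_left_mono spec_norm_nonneg) (simp add: mult.assoc)
    then show ?thesis
      by (simp add: power2_eq_square algebra_simps)
  qed
  finally show ?thesis .
qed

lemma borel_measurable_matrix_mult[measurable]:
  fixes f :: "'b \<Rightarrow> real^'m^'k" and g :: "'b \<Rightarrow> real^'n^'m"
  assumes "f \<in> borel_measurable N" "g \<in> borel_measurable N"
  shows "(\<lambda>x. f x ** g x) \<in> borel_measurable N"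
proof -
  have "continuous_on UNIV (\<lambda>p::(real^'m^'k) \<times> (real^'n^'m). fst p ** snd p)"
    unfolding matrix_matrix_mult_def by (intro continuous_intros)
  with assms show ?thesis
    by (rule borel_measurable_continuous_Pair)
qed

lemma chebT_cong: "(\<And>i. 1 \<le> i \<Longrightarrow> i \<le> k \<Longrightarrow> B i = C i) \<Longrightarrow> chebT B k = chebT C k"
  by (induction B k rule: chebT.induct) auto

lemma borel_measurable_chebT:
  "m \<le> n \<Longrightarrow> (\<lambda>B. chebT B m :: real^'k^'k) \<in> borel_measurable (PiM {1..n} (\<lambda>_. borel))"
proof (induction m rule: less_induct)
  case (less m)
  consider "m = 0" | "m = 1" | k where "m = Suc (Suc k)"
    by (metis One_nat_def not0_implies_Suc)
  then show ?case
  proof cases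
    case 3
    have [measurable]: "(\<lambda>B. B (Suc (Suc k)) :: real^'k^'k) \<in> borel_measurable (PiM {1..n} (\<lambda>_. borel))"
      using less.prems 3 by (intro measurable_component_singleton) auto
    have [measurable]: "(\<lambda>B. chebT B (Suc k) :: real^'k^'k) \<in> borel_measurable (PiM {1..n} (\<lambda>_. borel))"
      "(\<lambda>B. chebT B k :: real^'k^'k) \<in> borel_measurable (PiM {1..n} (\<lambda>_. borel))"
      using less.IH[of "Suc k"] less.IH[of k] less.prems 3 by simp_all
    show ?thesis
      unfolding 3 chebT.simps by measurable
  qed (use less.prems in \<open>simp_all add: measurable_component_singleton\<close>)
qed

lemma (in prob_space) indep_var_nn_integral:
  fixes X Y :: "'a \<Rightarrow> ennreal"
  assumes "indep_var borel X borel Y"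
  shows "(\<integral>\<^sup>+\<omega>. X \<omega> * Y \<omega> \<partial>M) = (\<integral>\<^sup>+\<omega>. X \<omega> \<partial>M) * (\<integral>\<^sup>+\<omega>. Y \<omega> \<partial>M)"
proof -
  have "case_bool borel borel = (\<lambda>_::bool. borel :: ennreal measure)"
    by (rule ext) (simp split: bool.split)
  with assms have "indep_vars (\<lambda>_. borel) (case_bool X Y) UNIV"
    unfolding indep_var_def by simp
  from indep_vars_nn_integral[OF _ this] show ?thesis
    by (simp add: UNIV_bool mult.commute)
qed

lemma (in prob_space) nn_integral_mult_indep_restrict:
  fixes f g :: "_ \<Rightarrow> ennreal"
  assumes "indep_vars N X I" "i \<in> I" "J \<subseteq> I" "i \<notin> J"
    and "f \<in> borel_measurable (N i)" "g \<in> borel_measurable (PiM J N)"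
  shows "(\<integral>\<^sup>+\<omega>. f (X i \<omega>) * g (restrict (\<lambda>j. X j \<omega>) J) \<partial>M)
    = (\<integral>\<^sup>+\<omega>. f (X i \<omega>) \<partial>M) * (\<integral>\<^sup>+\<omega>. g (restrict (\<lambda>j. X j \<omega>) J) \<partial>M)"
proof -
  have "indep_var (PiM {i} N) (\<lambda>\<omega>. restrict (\<lambda>j. X j \<omega>) {i}) (PiM J N) (\<lambda>\<omega>. restrict (\<lambda>j. X j \<omega>) J)"
    using assms(1-4) by (intro indep_var_restrict) auto
  moreover have "(\<lambda>x. f (x i)) \<in> borel_measurable (PiM {i} N)"
    using measurable_component_singleton[of i "{i}" N] assms(5) by measurable
  ultimately have "indep_var borel ((\<lambda>x. f (x i)) \<circ> (\<lambda>\<omega>. restrict (\<lambda>j. X j \<omega>) {i}))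
      borel (g \<circ> (\<lambda>\<omega>. restrict (\<lambda>j. X j \<omega>) J))"
    using assms(6) by (rule indep_var_compose)
  then show ?thesis
    by (simp add: indep_var_nn_integral comp_def)
qed

lemma nn_integral_ennreal_lincomb:
  assumes "f \<in> borel_measurable M" "g \<in> borel_measurable M"
    and "\<And>x. 0 \<le> f x" "\<And>x. 0 \<le> g x" "0 \<le> a" "0 \<le> b"
  shows "(\<integral>\<^sup>+x. ennreal (a * f x + b * g x) \<partial>M)
    = ennreal a * (\<integral>\<^sup>+x. ennreal (f x) \<partial>M) + ennreal b * (\<integral>\<^sup>+x. ennreal (g x) \<partial>M)"
proof -
  have "(\<integral>\<^sup>+x. ennreal (a * f x + b * g x) \<partial>M)
      = (\<integral>\<^sup>+x. ennreal a * ennreal (f x) + ennreal b * ennreal (g x) \<partial>M)"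
    using assms(3-6) by (intro nn_integral_cong) (simp add: ennreal_mult ennreal_plus[symmetric])
  also have "\<dots> = ennreal a * (\<integral>\<^sup>+x. ennreal (f x) \<partial>M) + ennreal b * (\<integral>\<^sup>+x. ennreal (g x) \<partial>M)"
    using assms(1,2) by (simp add: nn_integral_add nn_integral_cmult)
  finally show ?thesis .
qed

lemma (in prob_space) nn_integral_spec_norm_moments:
  assumes "X \<in> borel_measurable M"
  shows "(\<integral>\<^sup>+\<omega>. ennreal (4 * (spec_norm (X \<omega>))\<^sup>2 + 2 * spec_norm (X \<omega>)) \<partial>M)
      = 4 * (\<integral>\<^sup>+\<omega>. ennreal ((spec_norm (X \<omega>))\<^sup>2) \<partial>M) + 2 * (\<integral>\<^sup>+\<omega>. ennreal (spec_norm (X \<omega>)) \<partial>M)"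
    and "(\<integral>\<^sup>+\<omega>. ennreal (2 * spec_norm (X \<omega>) + 1) \<partial>M)
      = 2 * (\<integral>\<^sup>+\<omega>. ennreal (spec_norm (X \<omega>)) \<partial>M) + 1"
proof -
  show "(\<integral>\<^sup>+\<omega>. ennreal (4 * (spec_norm (X \<omega>))\<^sup>2 + 2 * spec_norm (X \<omega>)) \<partial>M)
      = 4 * (\<integral>\<^sup>+\<omega>. ennreal ((spec_norm (X \<omega>))\<^sup>2) \<partial>M) + 2 * (\<integral>\<^sup>+\<omega>. ennreal (spec_norm (X \<omega>)) \<partial>M)"
    using assms by (subst nn_integral_ennreal_lincomb) (simp_all add: spec_norm_nonneg)
  have "(\<integral>\<^sup>+\<omega>. ennreal (2 * spec_norm (X \<omega>) + 1 * 1) \<partial>M)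
      = ennreal 2 * (\<integral>\<^sup>+\<omega>. ennreal (spec_norm (X \<omega>)) \<partial>M) + ennreal 1 * (\<integral>\<^sup>+\<omega>. ennreal 1 \<partial>M)"
    using assms by (intro nn_integral_ennreal_lincomb) (simp_all add: spec_norm_nonneg)
  then show "(\<integral>\<^sup>+\<omega>. ennreal (2 * spec_norm (X \<omega>) + 1) \<partial>M)
      = 2 * (\<integral>\<^sup>+\<omega>. ennreal (spec_norm (X \<omega>)) \<partial>M) + 1"
    by (simp add: emeasure_space_1)
qed

lemma borel_measurable_chebT_comp:
  fixes X :: "nat \<Rightarrow> 'a \<Rightarrow> real^'k^'k"
  assumes "\<And>j. 1 \<le> j \<Longrightarrow> j \<le> m \<Longrightarrow> X j \<in> borel_measurable M"
  shows "(\<lambda>\<omega>. chebT (\<lambda>j. X j \<omega>) m) \<in> borel_measurable M"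
proof -
  have "(\<lambda>\<omega>. restrict (\<lambda>j. X j \<omega>) {1..m}) \<in> measurable M (PiM {1..m} (\<lambda>_. borel))"
    using assms by (intro measurable_restrict) auto
  from measurable_compose[OF this borel_measurable_chebT[OF order_refl]]
  have "(\<lambda>\<omega>. chebT (restrict (\<lambda>j. X j \<omega>) {1..m}) m) \<in> borel_measurable M" .
  moreover have "chebT (restrict (\<lambda>j. X j \<omega>) {1..m}) m = chebT (\<lambda>j. X j \<omega>) m" for \<omega>
    by (rule chebT_cong) simp
  ultimately show ?thesis
    by simp
qed

lemma (in prob_space) nn_integral_mult_chebT_indep:
  fixes Ahat :: "nat \<Rightarrow> 'a \<Rightarrow> real^'n^'n" and c :: "real^'n^'n \<Rightarrow> ennreal"
  assumes indep: "indep_vars (\<lambda>_. borel) Ahat {1..}"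
    and "c \<in> borel_measurable borel" "m \<le> Suc k"
  shows "(\<integral>\<^sup>+\<omega>. c (Ahat (Suc (Suc k)) \<omega>) * ennreal ((norm (chebT (\<lambda>j. Ahat j \<omega>) m))\<^sup>2) \<partial>M)
    = (\<integral>\<^sup>+\<omega>. c (Ahat (Suc (Suc k)) \<omega>) \<partial>M) * (\<integral>\<^sup>+\<omega>. ennreal ((norm (chebT (\<lambda>j. Ahat j \<omega>) m))\<^sup>2) \<partial>M)"
proof -
  define F where "F z = ennreal ((norm (chebT z m))\<^sup>2)" for z :: "nat \<Rightarrow> real^'n^'n"
  have "F \<in> borel_measurable (PiM {1..Suc k} (\<lambda>_. borel))"
    unfolding F_def using borel_measurable_chebT[OF assms(3)] by measurable
  moreover have "F (restrict (\<lambda>j. Ahat j \<omega>) {1..Suc k}) = F (\<lambda>j. Ahat j \<omega>)" for \<omega>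
    unfolding F_def using assms(3) by (subst chebT_cong) auto
  ultimately show ?thesis
    using nn_integral_mult_indep_restrict[OF indep, of "Suc (Suc k)" "{1..Suc k}" c F] assms(2)
    by (simp add: F_def)
qed

lemma (in prob_space) nn_integral_chebT_sq_step:
  fixes Ahat :: "nat \<Rightarrow> 'a \<Rightarrow> real^'n^'n"
  assumes indep: "indep_vars (\<lambda>_. borel) Ahat {1..}"
  shows "(\<integral>\<^sup>+\<omega>. ennreal ((norm (chebT (\<lambda>j. Ahat j \<omega>) (Suc (Suc k))))\<^sup>2) \<partial>M)
    \<le> (\<integral>\<^sup>+\<omega>. ennreal (4 * (spec_norm (Ahat (Suc (Suc k)) \<omega>))\<^sup>2 + 2 * spec_norm (Ahat (Suc (Suc k)) \<omega>)) \<partial>M)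
        * (\<integral>\<^sup>+\<omega>. ennreal ((norm (chebT (\<lambda>j. Ahat j \<omega>) (Suc k)))\<^sup>2) \<partial>M)
      + (\<integral>\<^sup>+\<omega>. ennreal (2 * spec_norm (Ahat (Suc (Suc k)) \<omega>) + 1) \<partial>M)
        * (\<integral>\<^sup>+\<omega>. ennreal ((norm (chebT (\<lambda>j. Ahat j \<omega>) k))\<^sup>2) \<partial>M)"
proof -
  let ?s = "\<lambda>\<omega>. spec_norm (Ahat (Suc (Suc k)) \<omega>)" and ?T = "\<lambda>m \<omega>. chebT (\<lambda>j. Ahat j \<omega>) m"
  have rv: "Ahat j \<in> borel_measurable M" if "j \<ge> 1" for j
    using indep that unfolding indep_vars_def by auto
  note [measurable] = rv[of "Suc (Suc k)"] borel_measurable_chebT_comp[of _ Ahat, OF rv]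
  have pointwise: "ennreal ((norm (?T (Suc (Suc k)) \<omega>))\<^sup>2)
      \<le> ennreal (4 * (?s \<omega>)\<^sup>2 + 2 * ?s \<omega>) * ennreal ((norm (?T (Suc k) \<omega>))\<^sup>2)
        + ennreal (2 * ?s \<omega> + 1) * ennreal ((norm (?T k \<omega>))\<^sup>2)" for \<omega>
  proof -
    have "ennreal ((norm (?T (Suc (Suc k)) \<omega>))\<^sup>2)
        \<le> ennreal ((4 * (?s \<omega>)\<^sup>2 + 2 * ?s \<omega>) * (norm (?T (Suc k) \<omega>))\<^sup>2 + (2 * ?s \<omega> + 1) * (norm (?T k \<omega>))\<^sup>2)"
      unfolding chebT.simps by (intro ennreal_leI norm_chebyshev_step_sq_le)
    then show ?thesis
      using spec_norm_nonneg[of "Ahat (Suc (Suc k)) \<omega>"] by (simp add: ennreal_mult ennreal_plus)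
  qed
  have "(\<integral>\<^sup>+\<omega>. ennreal ((norm (?T (Suc (Suc k)) \<omega>))\<^sup>2) \<partial>M)
      \<le> (\<integral>\<^sup>+\<omega>. ennreal (4 * (?s \<omega>)\<^sup>2 + 2 * ?s \<omega>) * ennreal ((norm (?T (Suc k) \<omega>))\<^sup>2)
          + ennreal (2 * ?s \<omega> + 1) * ennreal ((norm (?T k \<omega>))\<^sup>2) \<partial>M)"
    by (intro nn_integral_mono pointwise)
  also have "\<dots> = (\<integral>\<^sup>+\<omega>. ennreal (4 * (?s \<omega>)\<^sup>2 + 2 * ?s \<omega>) * ennreal ((norm (?T (Suc k) \<omega>))\<^sup>2) \<partial>M)
      + (\<integral>\<^sup>+\<omega>. ennreal (2 * ?s \<omega> + 1) * ennreal ((norm (?T k \<omega>))\<^sup>2) \<partial>M)"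
    by (intro nn_integral_add) measurable
  also have "\<dots> = (\<integral>\<^sup>+\<omega>. ennreal (4 * (?s \<omega>)\<^sup>2 + 2 * ?s \<omega>) \<partial>M) * (\<integral>\<^sup>+\<omega>. ennreal ((norm (?T (Suc k) \<omega>))\<^sup>2) \<partial>M)
      + (\<integral>\<^sup>+\<omega>. ennreal (2 * ?s \<omega> + 1) \<partial>M) * (\<integral>\<^sup>+\<omega>. ennreal ((norm (?T k \<omega>))\<^sup>2) \<partial>M)"
    by (subst (1 2) nn_integral_mult_chebT_indep[OF indep]) simp_all
  finally show ?thesis .
qed

lemma two_step_recurrence_le_power:
  fixes G p q :: "nat \<Rightarrow> ennreal"
  assumes "G 0 \<le> d" "G 1 \<le> d * a"
    and "\<And>k. G (Suc (Suc k)) \<le> p k * G (Suc k) + q k * G k"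
    and "\<And>k. p k + 1 \<le> a" "\<And>k. q k \<le> a"
  shows "G k \<le> d * a ^ k"
proof -
  have "G k \<le> d * a ^ k \<and> G (Suc k) \<le> d * a ^ Suc k" for k
  proof (induction k)
    case 0
    then show ?case using assms(1,2) by simp
  next
    case (Suc k)
    have "G (Suc (Suc k)) \<le> p k * (d * a ^ Suc k) + q k * (d * a ^ k)"
      using assms(3)[of k] Suc by (meson add_mono mult_left_mono order_trans zero_le)
    also have "\<dots> \<le> p k * (d * a ^ Suc k) + 1 * (d * a ^ Suc k)"
      using mult_right_mono[OF assms(5)[of k], of "d * a ^ k"] by (simp add: algebra_simps)
    also have "\<dots> \<le> a * (d * a ^ Suc k)"
      using mult_right_mono[OF assms(4)[of k], of "d * a ^ Suc k"] by (simp add: distrib_right)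
    finally show ?case
      using Suc by (simp add: algebra_simps)
  qed
  then show ?thesis by blast
qed

lemma nn_integral_norm_sq_le_card_spec_norm_sq:
  fixes X :: "'a \<Rightarrow> real^'n^'n"
  assumes [measurable]: "X \<in> borel_measurable M"
  shows "(\<integral>\<^sup>+\<omega>. ennreal ((norm (X \<omega>))\<^sup>2) \<partial>M)
    \<le> ennreal (real CARD('n)) * (\<integral>\<^sup>+\<omega>. ennreal ((spec_norm (X \<omega>))\<^sup>2) \<partial>M)"
proof -
  have "(\<integral>\<^sup>+\<omega>. ennreal ((norm (X \<omega>))\<^sup>2) \<partial>M)
      \<le> (\<integral>\<^sup>+\<omega>. ennreal (real CARD('n)) * ennreal ((spec_norm (X \<omega>))\<^sup>2) \<partial>M)"
    by (intro nn_integral_mono) (simp add: ennreal_mult[symmetric] norm_sq_le_card_spec_norm_sq)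
  also have "\<dots> = ennreal (real CARD('n)) * (\<integral>\<^sup>+\<omega>. ennreal ((spec_norm (X \<omega>))\<^sup>2) \<partial>M)"
    by (rule nn_integral_cmult) measurable
  finally show ?thesis .
qed

lemma (in prob_space) nn_integral_chebT_sq_le_power:
  fixes Ahat :: "nat \<Rightarrow> 'a \<Rightarrow> real^'n^'n"
  assumes indep: "indep_vars (\<lambda>_. borel) Ahat {1..}"
    and moments: "\<And>k. k \<ge> 1 \<Longrightarrow>
      4 * (\<integral>\<^sup>+\<omega>. ennreal ((spec_norm (Ahat k \<omega>))\<^sup>2) \<partial>M)
      + 2 * (\<integral>\<^sup>+\<omega>. ennreal (spec_norm (Ahat k \<omega>)) \<partial>M) + 1 \<le> a"
  shows "(\<integral>\<^sup>+\<omega>. ennreal ((norm (chebT (\<lambda>j. Ahat j \<omega>) k))\<^sup>2) \<partial>M) \<le> ennreal (real CARD('n)) * a ^ k"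
proof -
  have rv: "Ahat j \<in> borel_measurable M" if "j \<ge> 1" for j
    using indep that unfolding indep_vars_def by auto
  define P where "P k = (\<integral>\<^sup>+\<omega>. ennreal ((spec_norm (Ahat k \<omega>))\<^sup>2) \<partial>M)" for k
  define Q where "Q k = (\<integral>\<^sup>+\<omega>. ennreal (spec_norm (Ahat k \<omega>)) \<partial>M)" for k
  have moments': "4 * P k + (2 * Q k + 1) \<le> a" if "k \<ge> 1" for k
    using moments[OF that] by (simp add: P_def Q_def add.assoc)
  have P_le: "P k \<le> a" if "k \<ge> 1" for k
  proof -
    have "P k \<le> 4 * P k"
      using mult_right_mono[of 1 4 "P k"] by simp
    also have "\<dots> \<le> 4 * P k + (2 * Q k + 1)"
      by (rule add_increasing2) simp_all
    finally show ?thesis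
      using moments'[OF that] by (rule order_trans)
  qed
  have Q_le: "2 * Q k + 1 \<le> a" if "k \<ge> 1" for k
    using add_increasing[OF zero_le order_refl] moments'[OF that] by (rule order_trans)
  show ?thesis
  proof (rule two_step_recurrence_le_power[where p = "\<lambda>k. 4 * P (Suc (Suc k)) + 2 * Q (Suc (Suc k))"
        and q = "\<lambda>k. 2 * Q (Suc (Suc k)) + 1"])
    show "(\<integral>\<^sup>+\<omega>. ennreal ((norm (chebT (\<lambda>j. Ahat j \<omega>) 0))\<^sup>2) \<partial>M) \<le> ennreal (real CARD('n))"
      by (simp add: norm_mat_1_sq emeasure_space_1)
    from order_trans[OF nn_integral_norm_sq_le_card_spec_norm_sq[OF rv[of 1]]
        mult_left_mono[OF P_le[unfolded P_def, of 1]]]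
    show "(\<integral>\<^sup>+\<omega>. ennreal ((norm (chebT (\<lambda>j. Ahat j \<omega>) 1))\<^sup>2) \<partial>M) \<le> ennreal (real CARD('n)) * a"
      by simp
    show "(\<integral>\<^sup>+\<omega>. ennreal ((norm (chebT (\<lambda>j. Ahat j \<omega>) (Suc (Suc k))))\<^sup>2) \<partial>M)
      \<le> (4 * P (Suc (Suc k)) + 2 * Q (Suc (Suc k)))
          * (\<integral>\<^sup>+\<omega>. ennreal ((norm (chebT (\<lambda>j. Ahat j \<omega>) (Suc k)))\<^sup>2) \<partial>M)
        + (2 * Q (Suc (Suc k)) + 1) * (\<integral>\<^sup>+\<omega>. ennreal ((norm (chebT (\<lambda>j. Ahat j \<omega>) k))\<^sup>2) \<partial>M)" for k
      using nn_integral_chebT_sq_step[OF indep, of k] rv[of "Suc (Suc k)"]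
      by (simp add: P_def Q_def nn_integral_spec_norm_moments)
    show "4 * P (Suc (Suc k)) + 2 * Q (Suc (Suc k)) + 1 \<le> a" "2 * Q (Suc (Suc k)) + 1 \<le> a" for k
      using moments[of "Suc (Suc k)"] Q_le[of "Suc (Suc k)"] by (simp_all add: P_def Q_def)
  qed
qed

theorem mainTheorem3:
  fixes M :: "'a measure"
    and A :: "real^'n^'n"
    and Ahat :: "nat \<Rightarrow> 'a \<Rightarrow> real^'n^'n"
    and \<alpha> :: real
  assumes "prob_space M"
    and "transpose A = A"
    and "prob_space.indep_vars M (\<lambda>_. borel) Ahat {1..}"
    and "\<And>j. j \<ge> 1 \<Longrightarrow> integrable M (Ahat j)"
    and "\<And>j. j \<ge> 1 \<Longrightarrow> prob_space.expectation M (Ahat j) = A"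
    and "\<And>k. k \<ge> 1 \<Longrightarrow>
           4 * (\<integral>\<^sup>+ \<omega>. ennreal ((spec_norm (Ahat k \<omega>))\<^sup>2) \<partial>M)
           + 2 * (\<integral>\<^sup>+ \<omega>. ennreal (spec_norm (Ahat k \<omega>)) \<partial>M) + 1 \<le> ennreal \<alpha>"
  shows "\<forall>k. (\<integral>\<^sup>+ \<omega>. ennreal ((norm (chebT (\<lambda>j. Ahat j \<omega>) k))\<^sup>2) \<partial>M)
             \<le> ennreal (real CARD('n) * \<alpha> ^ k)"
proof -
  interpret prob_space M by fact
  have "1 \<le> ennreal \<alpha>"
    by (rule order_trans[OF add_increasing[OF zero_le order_refl] assms(6)[OF order_refl]])
  then have "1 \<le> \<alpha>"
    by simp
  with nn_integral_chebT_sq_le_power[OF assms(3,6)] show ?thesis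
    by (simp add: ennreal_mult ennreal_power)
qed

end
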